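(* In the ring $S$ (defined in the context), for every triple $(a,b,c)\neq(0,0,0)$ of nonnegative integers and every finite multiset $\Lambda$ of triples, we have \begin{align*} \bar m_{(a,b,c)}\bar m_{\Lambda}=&(u_{(a,b,c)}+1)\bar m_{(a,b,c)\Lambda}+\sum_{\substack{u_{(i,j,k)}>0\\ c+k\leq r-1}}(u_{(a+i,b+j,c+k)}+1)\bar m_{(a+i,b+j,c+k)\Lambda-(i,j,k)}\\ &+\sum_{\substack{u_{(i,j,k)}>0\\ c+k\geq r}}(u_{(a+i+1,b+j+1,c+k-r)}+1)\bar m_{(a+i+1,b+j+1,c+k-r)\Lambda-(i,j,k)}, \end{align*} where $u_{(i,j,k)}$ denotes the multiplicity of $(i,j,k)$ in $\Lambda$ and the sums run over the distinct triples $(i,j,k)$ occurring in $\Lambda$.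
   Context: Fix $r\geq1$. For $n\geq1$ let $R_n=\mathbb{C}[x_1,\dots,x_n,y_1,\dots,y_n,z_1,\dots,z_n]$ with $S_n$ permuting indices simultaneously, $I_n=(x_iy_i-z_i^r)_{i=1}^n$, $I_n^{S_n}=I_n\cap R_n^{S_n}$. The maps $R_{n+1}^{S_{n+1}}\to R_n^{S_n}$ set $x_{n+1}=y_{n+1}=z_{n+1}=0$; let $S'=\varprojlim R_n^{S_n}$ and $S=\varprojlim R_n^{S_n}/I_n^{S_n}$ (graded projective limits). For a finite multiset $\Lambda=(a_1,b_1,c_1)\cdots(a_l,b_l,c_l)$ of triples of nonnegative integers, none equal to $(0,0,0)$, $m_\Lambda\in S'$ is the element whose image in $R_n^{S_n}$ is the sum of all distinct monomials obtained from $x_1^{a_1}y_1^{b_1}z_1^{c_1}\cdots x_l^{a_l}y_l^{b_l}z_l^{c_l}$ by permuting indices (zero if $l>n$), and $\bar m_\Lambda$ is its image in $S$. Write $l(\Lambda)=l$, $(a,b,c)\Lambda$ for the multiset with $(a,b,c)$ added, and $\Lambda-(i,j,k)$ for the multiset with one copy of $(i,j,k)$ removed. *)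

theory Defs
  imports Complex_Main "HOL-Library.Poly_Mapping" "HOL-Library.Multiset" "HOL-Combinatorics.Permutations"
begin

(* Variables x_i, y_i, z_i (indices i = 0,1,2,...; R_n uses indices 0..n-1) *)
datatype var = X nat | Y nat | Z nat

type_synonym cpoly = "(var \<Rightarrow>\<^sub>0 nat) \<Rightarrow>\<^sub>0 complex"
type_synonym triple = "nat \<times> nat \<times> nat"

definition pvar :: "var \<Rightarrow> cpoly" where
  "pvar v = Poly_Mapping.single (Poly_Mapping.single v 1) 1"

definition monom_of :: "nat \<Rightarrow> (nat \<Rightarrow> triple) \<Rightarrow> cpoly" where
  "monom_of n f = Poly_Mapping.single
     (\<Sum>i<n. (case f i of (a, b, c) \<Rightarrow>
        Poly_Mapping.single (X i) a + Poly_Mapping.single (Y i) b + Poly_Mapping.single (Z i) c)) 1"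

(* image of m_Lambda in R_n: sum of all distinct monomials obtained from
   x_1^{a_1}.. z_l^{c_l} by permuting indices (0 if l > n).  Distinct monomials
   correspond exactly to exponent assignments f : {0..<n} -> triples whose
   multiset of values is Lambda padded with (0,0,0). *)
definition mono_sym :: "nat \<Rightarrow> triple multiset \<Rightarrow> cpoly" where
  "mono_sym n \<Lambda> = (\<Sum>f \<in> {f. (\<forall>i\<ge>n. f i = (0,0,0)) \<and> size \<Lambda> \<le> n \<and>
       mset (map f [0..<n]) = \<Lambda> + replicate_mset (n - size \<Lambda>) (0,0,0)}. monom_of n f)"

definition in_Rn :: "nat \<Rightarrow> cpoly \<Rightarrow> bool" where
  "in_Rn n p \<longleftrightarrow> (\<forall>mm::var \<Rightarrow>\<^sub>0 nat. mm \<in> Poly_Mapping.keys p \<longrightarrow>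
      (\<forall>v. v \<in> Poly_Mapping.keys mm \<longrightarrow> v \<in> X ` {..<n} \<union> Y ` {..<n} \<union> Z ` {..<n}))"

definition idealI :: "nat \<Rightarrow> nat \<Rightarrow> cpoly set" where
  "idealI r n = {\<Sum>i<n. q i * (pvar (X i) * pvar (Y i) - pvar (Z i) ^ r) | q. \<forall>i. in_Rn n (q i)}"

fun ren_var :: "(nat \<Rightarrow> nat) \<Rightarrow> var \<Rightarrow> var" where
  "ren_var \<sigma> (X i) = X (\<sigma> i)" | "ren_var \<sigma> (Y i) = Y (\<sigma> i)" | "ren_var \<sigma> (Z i) = Z (\<sigma> i)"

definition sym_n :: "nat \<Rightarrow> cpoly \<Rightarrow> bool" where
  "sym_n n p \<longleftrightarrow> (\<forall>\<sigma>. \<sigma> permutes {..<n} \<longrightarrow>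
      (\<forall>mm::var \<Rightarrow>\<^sub>0 nat. Poly_Mapping.lookup p mm = Poly_Mapping.lookup p (Abs_poly_mapping (\<lambda>v. Poly_Mapping.lookup mm (ren_var \<sigma> v)))))"

definition idealI_sym :: "nat \<Rightarrow> nat \<Rightarrow> cpoly set" where
  "idealI_sym r n = {p \<in> idealI r n. sym_n n p}"

(* Equality in S = lim R_n^{S_n}/I_n^{S_n} of elements given by compatible families
   (P n in R_n^{S_n}): componentwise equality of the classes. *)
definition eq_in_S :: "nat \<Rightarrow> (nat \<Rightarrow> cpoly) \<Rightarrow> (nat \<Rightarrow> cpoly) \<Rightarrow> bool" where
  "eq_in_S r P Q \<longleftrightarrow> (\<forall>n\<ge>1. P n - Q n \<in> idealI_sym r n)"

end

theory Submission
  imports Defs "HOL-Library.Product_Plus"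
begin

(* Multiplying a monomial of m_Lambda by x_p^a y_p^b z_p^c adds (a,b,c) to the exponent triple u
   sitting at index p, where u = (0,0,0) or u occurs in Lambda.  Grouping the products by u gives
   the symmetric function m_{(a,b,c)+u, Lambda-u}, each of whose monomials arises once for every
   index carrying the new triple, i.e. (multiplicity of (a,b,c)+u in Lambda) + 1 times; this is the
   product formula in R_n itself.  When the new z-exponent c+k reaches r, each monomial
   x_p^(a+i) y_p^(b+j) z_p^(c+k) M differs from x_p^(a+i+1) y_p^(b+j+1) z_p^(c+k-r) M by a multiple
   of x_p y_p - z_p^r; since both sides of that replacement are symmetric, the total difference
   lies in I_n^{S_n}. *)

definition exponent :: "nat \<Rightarrow> (nat \<Rightarrow> triple) \<Rightarrow> var \<Rightarrow>\<^sub>0 nat" where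
  "exponent n f = (\<Sum>i<n. case f i of (a, b, c) \<Rightarrow>
     Poly_Mapping.single (X i) a + Poly_Mapping.single (Y i) b + Poly_Mapping.single (Z i) c)"

lemma monom_of_eq_single: "monom_of n f = Poly_Mapping.single (exponent n f) 1"
  by (simp add: monom_of_def exponent_def)

lemma lookup_exponent [simp]:
  "Poly_Mapping.lookup (exponent n f) (X i) = (if i < n then fst (f i) else 0)"
  "Poly_Mapping.lookup (exponent n f) (Y i) = (if i < n then fst (snd (f i)) else 0)"
  "Poly_Mapping.lookup (exponent n f) (Z i) = (if i < n then snd (snd (f i)) else 0)"
  by (simp_all add: exponent_def lookup_sum lookup_add lookup_single when_def split_beta)

lemma exponent_fun_upd_add:
  "exponent n (f(p := f p + v)) = exponent n f + exponent n ((\<lambda>_. (0, 0, 0))(p := v))"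
  by (rule poly_mapping_eqI, case_tac k) (auto simp: lookup_add)

lemma monom_of_fun_upd_add:
  "monom_of n (f(p := f p + v)) = monom_of n f * monom_of n ((\<lambda>_. (0, 0, 0))(p := v))"
  by (simp add: monom_of_eq_single mult_single exponent_fun_upd_add)

lemma pvar_power: "pvar v ^ k = Poly_Mapping.single (Poly_Mapping.single v k) 1"
  by (induction k) (simp_all add: pvar_def mult_single flip: single_add)

lemma monom_of_single_index:
  assumes "p < n"
  shows "monom_of n ((\<lambda>_. (0, 0, 0))(p := (a, b, c))) = pvar (X p) ^ a * pvar (Y p) ^ b * pvar (Z p) ^ c"
proof -
  have "exponent n ((\<lambda>_. (0, 0, 0))(p := (a, b, c))) =
      Poly_Mapping.single (X p) a + Poly_Mapping.single (Y p) b + Poly_Mapping.single (Z p) c"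
    using assms by (intro poly_mapping_eqI, case_tac k) (auto simp: lookup_add lookup_single when_def)
  then show ?thesis
    by (simp add: monom_of_eq_single pvar_power mult_single)
qed

lemma monom_of_straighten:
  assumes "p < n"
  shows "monom_of n (f(p := (\<alpha>, \<beta>, \<gamma> + r))) - monom_of n (f(p := (\<alpha> + 1, \<beta> + 1, \<gamma>)))
    = - monom_of n (f(p := (\<alpha>, \<beta>, \<gamma>))) * (pvar (X p) * pvar (Y p) - pvar (Z p) ^ r)"
proof -
  define g where "g = f(p := (\<alpha>, \<beta>, \<gamma>))"
  have "monom_of n (f(p := (\<alpha>, \<beta>, \<gamma> + r))) = monom_of n g * monom_of n ((\<lambda>_. (0, 0, 0))(p := (0, 0, r)))"
    using monom_of_fun_upd_add[of n g p "(0, 0, r)"] by (simp add: g_def)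
  moreover have "monom_of n (f(p := (\<alpha> + 1, \<beta> + 1, \<gamma>))) = monom_of n g * monom_of n ((\<lambda>_. (0, 0, 0))(p := (1, 1, 0)))"
    using monom_of_fun_upd_add[of n g p "(1, 1, 0)"] by (simp add: g_def)
  ultimately show ?thesis
    using assms by (simp add: monom_of_single_index g_def algebra_simps)
qed

lemma filter_mset_neq_id: "z \<notin># M \<Longrightarrow> filter_mset (\<lambda>x. x \<noteq> z) M = M"
  by (auto simp: filter_mset_eq_conv)

lemma filter_mset_neq_eq_iff:
  assumes "z \<notin># M" and "size N = n"
  shows "filter_mset (\<lambda>x. x \<noteq> z) N = M \<longleftrightarrow> size M \<le> n \<and> N = M + replicate_mset (n - size M) z"
proof
  have N: "N = filter_mset (\<lambda>x. x \<noteq> z) N + replicate_mset (count N z) z"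
    using multiset_partition[of N "\<lambda>x. x \<noteq> z"] by (simp add: filter_eq_replicate_mset)
  assume "filter_mset (\<lambda>x. x \<noteq> z) N = M"
  with N have "N = M + replicate_mset (count N z) z"
    by simp
  moreover from this have "n = size M + count N z"
    using assms(2) by (metis size_union size_replicate_mset)
  ultimately show "size M \<le> n \<and> N = M + replicate_mset (n - size M) z"
    by simp
next
  assume "size M \<le> n \<and> N = M + replicate_mset (n - size M) z"
  then show "filter_mset (\<lambda>x. x \<noteq> z) N = M"
    using filter_mset_neq_id[OF assms(1)] by simp
qed

(* They index the monomials of m_M just as the padded description in mono_sym does, but stay
   meaningful after one entry is changed. *)
definition assignments :: "nat \<Rightarrow> triple multiset \<Rightarrow> (nat \<Rightarrow> triple) set" where
  "assignments n M = {f. (\<forall>i\<ge>n. f i = (0, 0, 0)) \<and>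
     filter_mset (\<lambda>x. x \<noteq> (0, 0, 0)) (mset (map f [0..<n])) = M}"

lemma mono_sym_eq_sum_assignments:
  assumes "(0, 0, 0) \<notin># M"
  shows "mono_sym n M = (\<Sum>f\<in>assignments n M. monom_of n f)"
  unfolding mono_sym_def assignments_def
proof (rule sum.cong[OF Collect_cong refl])
  fix f :: "nat \<Rightarrow> triple"
  show "((\<forall>i\<ge>n. f i = (0, 0, 0)) \<and> size M \<le> n \<and>
      mset (map f [0..<n]) = M + replicate_mset (n - size M) (0, 0, 0)) \<longleftrightarrow>
    ((\<forall>i\<ge>n. f i = (0, 0, 0)) \<and> filter_mset (\<lambda>x. x \<noteq> (0, 0, 0)) (mset (map f [0..<n])) = M)"
    using filter_mset_neq_eq_iff[OF assms, of "mset (map f [0..<n])" n] by simp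
qed

lemma assignments_nonzero_value:
  assumes "f \<in> assignments n M" and "f p \<noteq> (0, 0, 0)"
  shows "p < n" and "f p \<in># M"
proof -
  show "p < n"
    using assms unfolding assignments_def by (metis (mono_tags) mem_Collect_eq not_le)
  then have "f p \<in># mset (map f [0..<n])"
    by simp
  with assms show "f p \<in># M"
    unfolding assignments_def by auto
qed

lemma finite_assignments: "finite (assignments n M)"
proof (rule finite_subset)
  show "assignments n M \<subseteq> {f. \<forall>p. (p \<in> {..<n} \<longrightarrow> f p \<in> insert (0, 0, 0) (set_mset M)) \<and>
      (p \<notin> {..<n} \<longrightarrow> f p = (0, 0, 0))}"
    using assignments_nonzero_value unfolding assignments_def by blast
  show "finite \<dots>"
    by (rule finite_set_of_finite_funs) auto
qed

lemma assignments_empty: "assignments n {#} = {\<lambda>_. (0, 0, 0)}"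
proof -
  have "f = (\<lambda>_. (0, 0, 0))" if "f \<in> assignments n {#}" for f
    using assignments_nonzero_value(2)[OF that] by auto
  moreover have "(\<lambda>_. (0, 0, 0)) \<in> assignments n {#}"
    unfolding assignments_def by (simp add: filter_mset_eq_conv)
  ultimately show ?thesis
    by blast
qed

lemma mset_map_fun_upd:
  assumes "p < n"
  shows "mset (map (f(p := v)) [0..<n]) = add_mset v (mset (map f [0..<n]) - {#f p#})"
proof -
  have "map (f(p := v)) [0..<n] = (map f [0..<n])[p := v]"
    by (rule nth_equalityI) (auto simp: nth_list_update)
  then show ?thesis
    using assms by (simp add: mset_update)
qed

lemma filter_mset_add_mset_diff:
  "filter_mset P (add_mset v (N - {#x#})) = filter_mset P (add_mset v (filter_mset P N - {#x#}))"
  by (cases "P x") (simp_all add: multiset_eq_iff)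

lemma assignments_fun_upd:
  assumes "f \<in> assignments n M" and "p < n"
  shows "f(p := v) \<in> assignments n (filter_mset (\<lambda>x. x \<noteq> (0, 0, 0)) (add_mset v (M - {#f p#})))"
proof -
  define N where "N = mset (map f [0..<n])"
  have "filter_mset (\<lambda>x. x \<noteq> (0, 0, 0)) N = M"
    using assms(1) unfolding assignments_def N_def by blast
  then have "filter_mset (\<lambda>x. x \<noteq> (0, 0, 0)) (mset (map (f(p := v)) [0..<n]))
      = filter_mset (\<lambda>x. x \<noteq> (0, 0, 0)) (add_mset v (M - {#f p#}))"
    unfolding mset_map_fun_upd[OF assms(2)] N_def[symmetric] filter_mset_add_mset_diff[of _ v N]
    by simp
  with assms show ?thesis
    unfolding assignments_def by simp
qed

lemma card_fiber_assignments:
  assumes "f \<in> assignments n M" and "v \<noteq> (0, 0, 0)"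
  shows "card {p. p < n \<and> f p = v} = count M v"
proof -
  define N where "N = mset (map f [0..<n])"
  have "card {p. p < n \<and> f p = v} = count N v"
    unfolding N_def count_mset count_list_eq_length_filter length_filter_conv_card
    by (rule arg_cong[where f = card]) auto
  also have "\<dots> = count (filter_mset (\<lambda>x. x \<noteq> (0, 0, 0)) N) v"
    using assms(2) by simp
  also have "filter_mset (\<lambda>x. x \<noteq> (0, 0, 0)) N = M"
    using assms(1) unfolding assignments_def N_def by blast
  finally show ?thesis .
qed

definition replace_sum :: "nat \<Rightarrow> triple multiset \<Rightarrow> triple \<Rightarrow> triple \<Rightarrow> cpoly" where
  "replace_sum n M u v = (\<Sum>f\<in>assignments n M. \<Sum>p\<in>{p. p < n \<and> f p = u}. monom_of n (f(p := v)))"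

(* Changing the entry at p from u to v maps the pairs (f, p) with f p = u bijectively onto the
   pairs (g, p) with g p = v and g an assignment of v(M - u); each such g has count M v + 1
   indices carrying v. *)
lemma replace_sum_eq_mono_sym:
  assumes M: "(0, 0, 0) \<notin># M" and u: "u = (0, 0, 0) \<or> u \<in># M"
    and v: "v \<noteq> (0, 0, 0)" "v \<noteq> u"
  shows "replace_sum n M u v = of_nat (count M v + 1) * mono_sym n (add_mset v (M - {#u#}))"
proof -
  define M' where "M' = add_mset v (M - {#u#})"
  have M': "(0, 0, 0) \<notin># M'"
    using M v by (auto simp: M'_def dest: in_diffD)
  have M_back: "filter_mset (\<lambda>x. x \<noteq> (0, 0, 0)) (add_mset u (M' - {#v#})) = M"
    using u
  proof
    assume "u = (0, 0, 0)"
    then show ?thesis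
      using M by (simp add: M'_def diff_single_trivial filter_mset_neq_id)
  next
    assume "u \<in># M"
    then show ?thesis
      using M by (simp add: M'_def filter_mset_neq_id)
  qed
  let ?A = "Sigma (assignments n M) (\<lambda>f. {p. p < n \<and> f p = u})"
  let ?B = "Sigma (assignments n M') (\<lambda>g. {p. p < n \<and> g p = v})"
  have to_B: "f(p := v) \<in> assignments n M'" if "f \<in> assignments n M" "p < n" "f p = u" for f p
  proof -
    have "f(p := v) \<in> assignments n (filter_mset (\<lambda>x. x \<noteq> (0, 0, 0)) M')"
      using assignments_fun_upd[OF that(1,2), of v] unfolding that(3) M'_def .
    then show ?thesis
      by (simp only: filter_mset_neq_id[OF M'])
  qed
  have to_A: "g(p := u) \<in> assignments n M" if "g \<in> assignments n M'" "p < n" "g p = v" for g p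
    using assignments_fun_upd[OF that(1,2), of u] unfolding that(3) M_back .
  have "replace_sum n M u v = (\<Sum>(f, p)\<in>?A. monom_of n (f(p := v)))"
    unfolding replace_sum_def by (rule sum.Sigma) (auto simp: finite_assignments)
  also have "\<dots> = (\<Sum>(g, p)\<in>?B. monom_of n g)"
    by (rule sum.reindex_bij_witness[where i = "\<lambda>(g, p). (g(p := u), p)" and j = "\<lambda>(f, p). (f(p := v), p)"])
      (auto simp: to_A to_B)
  also have "\<dots> = (\<Sum>g\<in>assignments n M'. of_nat (card {p. p < n \<and> g p = v}) * monom_of n g)"
    by (subst sum.Sigma[symmetric]) (auto simp: finite_assignments)
  also have "\<dots> = (\<Sum>g\<in>assignments n M'. of_nat (count M v + 1) * monom_of n g)"
    using card_fiber_assignments[of _ n M' v] v by (intro sum.cong) (auto simp: M'_def)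
  also have "\<dots> = of_nat (count M v + 1) * mono_sym n M'"
    by (simp add: mono_sym_eq_sum_assignments[OF M'] sum_distrib_left)
  finally show ?thesis
    unfolding M'_def .
qed

lemma mono_sym_singleton:
  assumes "d \<noteq> (0, 0, 0)"
  shows "mono_sym n {#d#} = (\<Sum>p<n. monom_of n ((\<lambda>_. (0, 0, 0))(p := d)))"
proof -
  have "mono_sym n {#d#} = replace_sum n {#} (0, 0, 0) d"
    using replace_sum_eq_mono_sym[of "{#}" "(0, 0, 0)" d n] assms by simp
  also have "\<dots> = (\<Sum>p<n. monom_of n ((\<lambda>_. (0, 0, 0))(p := d)))"
    unfolding replace_sum_def assignments_empty by (simp add: lessThan_def fun_upd_def)
  finally show ?thesis .
qed

lemma mono_sym_singleton_mult_replace_sum: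
  assumes d: "d \<noteq> (0, 0, 0)" and M: "(0, 0, 0) \<notin># M"
  shows "mono_sym n {#d#} * mono_sym n M = (\<Sum>u\<in>insert (0, 0, 0) (set_mset M). replace_sum n M u (d + u))"
proof -
  let ?U = "insert (0, 0, 0) (set_mset M)"
  have regroup: "(\<Sum>p<n. monom_of n (f(p := d + f p)))
      = (\<Sum>u\<in>?U. \<Sum>p\<in>{p. p < n \<and> f p = u}. monom_of n (f(p := d + u)))"
    if f: "f \<in> assignments n M" for f
  proof -
    have "f p \<in> ?U" for p
      using assignments_nonzero_value(2)[OF f, of p] by (cases "f p = (0, 0, 0)") simp_all
    then have "f ` {..<n} \<subseteq> ?U"
      by blast
    then have "(\<Sum>p<n. monom_of n (f(p := d + f p)))
        = (\<Sum>u\<in>?U. \<Sum>p\<in>{p \<in> {..<n}. f p = u}. monom_of n (f(p := d + f p)))"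
      by (intro sum.group[symmetric]) auto
    also have "\<dots> = (\<Sum>u\<in>?U. \<Sum>p\<in>{p. p < n \<and> f p = u}. monom_of n (f(p := d + u)))"
      by (intro sum.cong refl) auto
    finally show ?thesis .
  qed
  have "mono_sym n {#d#} * mono_sym n M
      = (\<Sum>p<n. \<Sum>f\<in>assignments n M. monom_of n f * monom_of n ((\<lambda>_. (0, 0, 0))(p := d)))"
    unfolding mono_sym_singleton[OF d] mono_sym_eq_sum_assignments[OF M] sum_product
    by (simp add: mult.commute)
  also have "\<dots> = (\<Sum>f\<in>assignments n M. \<Sum>p<n. monom_of n (f(p := d + f p)))"
    by (subst sum.swap) (simp add: monom_of_fun_upd_add[symmetric] add.commute)
  also have "\<dots> = (\<Sum>u\<in>?U. replace_sum n M u (d + u))"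
    unfolding replace_sum_def by (simp add: regroup sum.swap[of _ ?U] cong: sum.cong)
  finally show ?thesis .
qed

lemma mono_sym_singleton_mult:
  assumes abc: "(a, b, c) \<noteq> (0, 0, 0)" and M: "(0, 0, 0) \<notin># M"
  shows "mono_sym n {#(a, b, c)#} * mono_sym n M
    = of_nat (count M (a, b, c) + 1) * mono_sym n (add_mset (a, b, c) M)
      + (\<Sum>(i, j, k)\<in>set_mset M. of_nat (count M (a + i, b + j, c + k) + 1)
          * mono_sym n (add_mset (a + i, b + j, c + k) (M - {#(i, j, k)#})))"
proof -
  have "replace_sum n M t ((a, b, c) + t) = of_nat (count M (a + i, b + j, c + k) + 1)
          * mono_sym n (add_mset (a + i, b + j, c + k) (M - {#(i, j, k)#}))"
    if "t = (i, j, k)" "t \<in># M" for t i j k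
    using replace_sum_eq_mono_sym[OF M, of t "(a, b, c) + t"] abc that by auto
  then have "(\<Sum>t\<in>set_mset M. replace_sum n M t ((a, b, c) + t)) =
      (\<Sum>(i, j, k)\<in>set_mset M. of_nat (count M (a + i, b + j, c + k) + 1)
          * mono_sym n (add_mset (a + i, b + j, c + k) (M - {#(i, j, k)#})))"
    by (intro sum.cong refl) auto
  moreover have "replace_sum n M (0, 0, 0) (a, b, c)
      = of_nat (count M (a, b, c) + 1) * mono_sym n (add_mset (a, b, c) M)"
    using replace_sum_eq_mono_sym[OF M, of "(0, 0, 0)" "(a, b, c)"] abc M
    by (simp add: diff_single_trivial)
  ultimately show ?thesis
    using M by (simp add: mono_sym_singleton_mult_replace_sum[OF abc M])
qed

lemma in_Rn_zero: "in_Rn n 0"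
  by (simp add: in_Rn_def)

lemma in_Rn_uminus: "in_Rn n p \<Longrightarrow> in_Rn n (- p)"
  by (simp add: in_Rn_def in_keys_iff)

lemma in_Rn_add:
  assumes "in_Rn n p" and "in_Rn n q"
  shows "in_Rn n (p + q)"
  unfolding in_Rn_def
proof (intro allI impI)
  fix mm :: "var \<Rightarrow>\<^sub>0 nat" and v
  assume "mm \<in> Poly_Mapping.keys (p + q)" and "v \<in> Poly_Mapping.keys mm"
  moreover have "Poly_Mapping.keys (p + q) \<subseteq> Poly_Mapping.keys p \<union> Poly_Mapping.keys q"
    by (rule keys_add)
  ultimately show "v \<in> X ` {..<n} \<union> Y ` {..<n} \<union> Z ` {..<n}"
    using assms unfolding in_Rn_def by (meson UnE subsetD)
qed

lemma in_Rn_monom_of: "in_Rn n (monom_of n f)"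
  unfolding in_Rn_def monom_of_eq_single
proof (intro allI impI)
  fix mm :: "var \<Rightarrow>\<^sub>0 nat" and v
  assume "mm \<in> Poly_Mapping.keys (Poly_Mapping.single (exponent n f) (1 :: complex))"
    and "v \<in> Poly_Mapping.keys mm"
  then have "Poly_Mapping.lookup (exponent n f) v \<noteq> 0"
    by (simp add: in_keys_iff)
  then show "v \<in> X ` {..<n} \<union> Y ` {..<n} \<union> Z ` {..<n}"
    by (cases v) (auto split: if_splits)
qed

lemma idealI_zero: "0 \<in> idealI r n"
  unfolding idealI_def by (auto intro!: exI[of _ "\<lambda>_. 0"] simp: in_Rn_zero)

lemma idealI_add:
  assumes "p \<in> idealI r n" and "q \<in> idealI r n"
  shows "p + q \<in> idealI r n"
proof -
  obtain g h where "p = (\<Sum>i<n. g i * (pvar (X i) * pvar (Y i) - pvar (Z i) ^ r))" "\<forall>i. in_Rn n (g i)"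
    and "q = (\<Sum>i<n. h i * (pvar (X i) * pvar (Y i) - pvar (Z i) ^ r))" "\<forall>i. in_Rn n (h i)"
    using assms unfolding idealI_def by blast
  then show ?thesis
    unfolding idealI_def
    by (auto intro!: exI[of _ "\<lambda>i. g i + h i"] simp: in_Rn_add sum.distrib distrib_right)
qed

lemma idealI_sum: "finite A \<Longrightarrow> (\<And>x. x \<in> A \<Longrightarrow> g x \<in> idealI r n) \<Longrightarrow> (\<Sum>x\<in>A. g x) \<in> idealI r n"
  by (induction A rule: finite_induct) (simp_all add: idealI_zero idealI_add)

lemma idealI_generator_mult:
  assumes "p < n" and "in_Rn n q"
  shows "q * (pvar (X p) * pvar (Y p) - pvar (Z p) ^ r) \<in> idealI r n"
proof -
  have "q * (pvar (X p) * pvar (Y p) - pvar (Z p) ^ r)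
      = (\<Sum>i<n. (if i = p then q else 0) * (pvar (X i) * pvar (Y i) - pvar (Z i) ^ r))"
    using assms(1) by (simp add: if_distrib[of "\<lambda>x. x * _"] cong: if_cong)
  then show ?thesis
    unfolding idealI_def using assms(2) in_Rn_zero by auto
qed

lemma replace_sum_straighten:
  "replace_sum n M u (\<alpha>, \<beta>, \<gamma> + r) - replace_sum n M u (\<alpha> + 1, \<beta> + 1, \<gamma>) \<in> idealI r n"
  unfolding replace_sum_def sum_subtractf[symmetric]
proof (intro idealI_sum finite_assignments)
  fix f p
  assume "p \<in> {p. p < n \<and> f p = u}"
  then have "p < n"
    by simp
  then show "monom_of n (f(p := (\<alpha>, \<beta>, \<gamma> + r))) - monom_of n (f(p := (\<alpha> + 1, \<beta> + 1, \<gamma>))) \<in> idealI r n"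
    unfolding monom_of_straighten[OF \<open>p < n\<close>]
    by (intro idealI_generator_mult in_Rn_uminus in_Rn_monom_of)
qed simp

lemma inj_ren_var:
  assumes "inj \<sigma>"
  shows "inj (ren_var \<sigma>)"
proof (rule injI)
  fix v w
  assume "ren_var \<sigma> v = ren_var \<sigma> w"
  then show "v = w"
    using injD[OF assms] by (cases v; cases w) simp_all
qed

lemma lookup_map_key_ren_var:
  assumes "inj \<sigma>"
  shows "Poly_Mapping.lookup (Poly_Mapping.map_key (ren_var \<sigma>) m) v = Poly_Mapping.lookup m (ren_var \<sigma> v)"
  using fun_cong[OF map_key.rep_eq[OF inj_ren_var[OF assms], of m], of v] by simp

lemma sym_n_iff_map_key:
  "sym_n n p \<longleftrightarrow> (\<forall>\<sigma>. \<sigma> permutes {..<n} \<longrightarrow>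
     (\<forall>mm. Poly_Mapping.lookup p mm = Poly_Mapping.lookup p (Poly_Mapping.map_key (ren_var \<sigma>) mm)))"
proof -
  have "Abs_poly_mapping (\<lambda>v. Poly_Mapping.lookup mm (ren_var \<sigma> v)) = Poly_Mapping.map_key (ren_var \<sigma>) mm"
    if "\<sigma> permutes {..<n}" for \<sigma> and mm :: "var \<Rightarrow>\<^sub>0 nat"
  proof -
    have "Poly_Mapping.lookup (Poly_Mapping.map_key (ren_var \<sigma>) mm) = (\<lambda>v. Poly_Mapping.lookup mm (ren_var \<sigma> v))"
      by (rule ext) (rule lookup_map_key_ren_var[OF permutes_inj[OF that]])
    then show ?thesis
      by (metis lookup_inverse)
  qed
  then show ?thesis
    unfolding sym_n_def by simp
qed

lemma sym_n_sum:
  assumes "\<And>x. x \<in> A \<Longrightarrow> sym_n n (g x)"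
  shows "sym_n n (\<Sum>x\<in>A. g x)"
  unfolding sym_n_iff_map_key lookup_sum
proof (intro allI impI sum.cong refl)
  fix \<sigma> mm x
  assume "\<sigma> permutes {..<n}" and "x \<in> A"
  then show "Poly_Mapping.lookup (g x) mm = Poly_Mapping.lookup (g x) (Poly_Mapping.map_key (ren_var \<sigma>) mm)"
    using assms unfolding sym_n_iff_map_key by blast
qed

lemma sym_n_diff:
  assumes "sym_n n p" and "sym_n n q"
  shows "sym_n n (p - q)"
  unfolding sym_n_iff_map_key lookup_minus
proof (intro allI impI)
  fix \<sigma> mm
  assume "\<sigma> permutes {..<n}"
  then have "Poly_Mapping.lookup p mm = Poly_Mapping.lookup p (Poly_Mapping.map_key (ren_var \<sigma>) mm)"
    and "Poly_Mapping.lookup q mm = Poly_Mapping.lookup q (Poly_Mapping.map_key (ren_var \<sigma>) mm)"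
    using assms unfolding sym_n_iff_map_key by blast+
  then show "Poly_Mapping.lookup p mm - Poly_Mapping.lookup q mm
      = Poly_Mapping.lookup p (Poly_Mapping.map_key (ren_var \<sigma>) mm)
        - Poly_Mapping.lookup q (Poly_Mapping.map_key (ren_var \<sigma>) mm)"
    by (simp only:)
qed

lemma sym_n_of_nat_mult:
  assumes "sym_n n p"
  shows "sym_n n (of_nat k * p)"
proof -
  have "of_nat k * p = (\<Sum>_<k. p)"
    by simp
  then show ?thesis
    using sym_n_sum[of "{..<k}" n "\<lambda>_. p"] assms by simp
qed

lemma exponent_comp_permutes:
  assumes \<sigma>: "\<sigma> permutes {..<n}"
  shows "exponent n (f \<circ> \<sigma>) = Poly_Mapping.map_key (ren_var \<sigma>) (exponent n f)"
proof (rule poly_mapping_eqI)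
  fix v
  have "\<sigma> i < n \<longleftrightarrow> i < n" for i
    using permutes_in_image[OF \<sigma>] by simp
  then show "Poly_Mapping.lookup (exponent n (f \<circ> \<sigma>)) v
      = Poly_Mapping.lookup (Poly_Mapping.map_key (ren_var \<sigma>) (exponent n f)) v"
    by (cases v) (simp_all add: lookup_map_key_ren_var[OF permutes_inj[OF \<sigma>]])
qed

lemma inj_map_key_ren_var:
  assumes \<sigma>: "\<sigma> permutes {..<n}"
  shows "inj (Poly_Mapping.map_key (ren_var \<sigma>) :: (var \<Rightarrow>\<^sub>0 nat) \<Rightarrow> _)"
proof (rule injI)
  fix m m' :: "var \<Rightarrow>\<^sub>0 nat"
  assume eq: "Poly_Mapping.map_key (ren_var \<sigma>) m = Poly_Mapping.map_key (ren_var \<sigma>) m'"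
  show "m = m'"
  proof (rule poly_mapping_eqI)
    fix w
    have w: "ren_var \<sigma> (ren_var (inv \<sigma>) w) = w"
      by (cases w) (simp_all add: permutes_inverses[OF \<sigma>])
    have "Poly_Mapping.lookup (Poly_Mapping.map_key (ren_var \<sigma>) m) (ren_var (inv \<sigma>) w)
        = Poly_Mapping.lookup (Poly_Mapping.map_key (ren_var \<sigma>) m') (ren_var (inv \<sigma>) w)"
      by (simp only: eq)
    then show "Poly_Mapping.lookup m w = Poly_Mapping.lookup m' w"
      by (simp only: lookup_map_key_ren_var[OF permutes_inj[OF \<sigma>]] w)
  qed
qed

lemma sym_n_sum_monom_of:
  assumes closed: "\<And>\<sigma> f. \<sigma> permutes {..<n} \<Longrightarrow> f \<in> S \<Longrightarrow> f \<circ> \<sigma> \<in> S"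
  shows "sym_n n (\<Sum>f\<in>S. monom_of n f)"
  unfolding sym_n_iff_map_key
proof (intro allI impI)
  fix \<sigma> and mm :: "var \<Rightarrow>\<^sub>0 nat"
  assume \<sigma>: "\<sigma> permutes {..<n}"
  let ?R = "Poly_Mapping.map_key (ren_var \<sigma>)"
  have bij: "bij_betw (\<lambda>f. f \<circ> \<sigma>) S S"
  proof (rule bij_betw_byWitness[where f' = "\<lambda>f. f \<circ> inv \<sigma>"])
    show "\<forall>f\<in>S. f \<circ> \<sigma> \<circ> inv \<sigma> = f" and "\<forall>f\<in>S. f \<circ> inv \<sigma> \<circ> \<sigma> = f"
      by (simp_all add: o_assoc[symmetric] permutes_inv_o[OF \<sigma>])
    show "(\<lambda>f. f \<circ> \<sigma>) ` S \<subseteq> S" and "(\<lambda>f. f \<circ> inv \<sigma>) ` S \<subseteq> S"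
      using closed \<sigma> permutes_inv[OF \<sigma>] by blast+
  qed
  have "(\<Sum>f\<in>S. 1 when exponent n f = mm) = (\<Sum>f\<in>S. 1 when exponent n (f \<circ> \<sigma>) = ?R mm)"
    by (simp add: exponent_comp_permutes[OF \<sigma>] inj_eq[OF inj_map_key_ren_var[OF \<sigma>]])
  also have "\<dots> = (\<Sum>f\<in>S. 1 when exponent n f = ?R mm)"
    by (rule sum.reindex_bij_betw[OF bij])
  finally show "Poly_Mapping.lookup (\<Sum>f\<in>S. monom_of n f) mm
      = Poly_Mapping.lookup (\<Sum>f\<in>S. monom_of n f) (?R mm)"
    by (simp add: lookup_sum monom_of_eq_single lookup_single)
qed

lemma mset_map_comp_permutes:
  assumes "\<sigma> permutes {..<n}"
  shows "mset (map (f \<circ> \<sigma>) [0..<n]) = mset (map f [0..<n])"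
proof -
  have "mset (map \<sigma> [0..<n]) = mset [0..<n]"
    using permutes_image_mset[OF assms] by (simp add: lessThan_atLeast0)
  then show ?thesis
    by (metis map_map mset_map)
qed

lemma sym_n_mono_sym: "sym_n n (mono_sym n M)"
  unfolding mono_sym_def
proof (rule sym_n_sum_monom_of)
  fix \<sigma> f
  assume \<sigma>: "\<sigma> permutes {..<n}" and f: "f \<in> {f. (\<forall>i\<ge>n. f i = (0, 0, 0)) \<and> size M \<le> n \<and>
      mset (map f [0..<n]) = M + replicate_mset (n - size M) (0, 0, 0)}"
  have "\<forall>i\<ge>n. (f \<circ> \<sigma>) i = (0, 0, 0)"
    using f permutes_not_in[OF \<sigma>] by simp
  then show "f \<circ> \<sigma> \<in> {f. (\<forall>i\<ge>n. f i = (0, 0, 0)) \<and> size M \<le> n \<and>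
      mset (map f [0..<n]) = M + replicate_mset (n - size M) (0, 0, 0)}"
    using f by (simp only: mem_Collect_eq mset_map_comp_permutes[OF \<sigma>])
qed


lemma idealI_sym_sum:
  "finite A \<Longrightarrow> (\<And>x. x \<in> A \<Longrightarrow> g x \<in> idealI_sym r n) \<Longrightarrow> (\<Sum>x\<in>A. g x) \<in> idealI_sym r n"
  unfolding idealI_sym_def by (simp add: idealI_sum sym_n_sum)

lemma mono_sym_straighten:
  assumes M: "(0, 0, 0) \<notin># M" and t: "t \<in># M" "t \<noteq> (\<alpha>, \<beta>, \<gamma> + r)" "t \<noteq> (\<alpha> + 1, \<beta> + 1, \<gamma>)"
    and r: "r \<ge> 1"
  shows "of_nat (count M (\<alpha>, \<beta>, \<gamma> + r) + 1) * mono_sym n (add_mset (\<alpha>, \<beta>, \<gamma> + r) (M - {#t#}))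
      - of_nat (count M (\<alpha> + 1, \<beta> + 1, \<gamma>) + 1) * mono_sym n (add_mset (\<alpha> + 1, \<beta> + 1, \<gamma>) (M - {#t#}))
    \<in> idealI_sym r n"
  unfolding idealI_sym_def
proof (intro CollectI conjI sym_n_diff sym_n_of_nat_mult sym_n_mono_sym)
  have "replace_sum n M t (\<alpha>, \<beta>, \<gamma> + r)
      = of_nat (count M (\<alpha>, \<beta>, \<gamma> + r) + 1) * mono_sym n (add_mset (\<alpha>, \<beta>, \<gamma> + r) (M - {#t#}))"
    by (rule replace_sum_eq_mono_sym) (use M t r in auto)
  moreover have "replace_sum n M t (\<alpha> + 1, \<beta> + 1, \<gamma>)
      = of_nat (count M (\<alpha> + 1, \<beta> + 1, \<gamma>) + 1) * mono_sym n (add_mset (\<alpha> + 1, \<beta> + 1, \<gamma>) (M - {#t#}))"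
    by (rule replace_sum_eq_mono_sym) (use M t in auto)
  ultimately show "of_nat (count M (\<alpha>, \<beta>, \<gamma> + r) + 1) * mono_sym n (add_mset (\<alpha>, \<beta>, \<gamma> + r) (M - {#t#}))
      - of_nat (count M (\<alpha> + 1, \<beta> + 1, \<gamma>) + 1) * mono_sym n (add_mset (\<alpha> + 1, \<beta> + 1, \<gamma>) (M - {#t#}))
    \<in> idealI r n"
    using replace_sum_straighten[of n M t \<alpha> \<beta> \<gamma> r] by simp
qed

lemma sum_set_mset_threshold_split:
  fixes M :: "triple multiset" and r c :: nat
  assumes "r \<ge> 1"
  shows "sum g (set_mset M) = sum g {(i, j, k). (i, j, k) \<in># M \<and> c + k \<le> r - 1}
    + sum g {(i, j, k). (i, j, k) \<in># M \<and> c + k \<ge> r}"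
    (is "_ = sum g ?A1 + sum g ?A2")
proof -
  have "set_mset M = ?A1 \<union> ?A2"
    by auto
  then have "sum g (set_mset M) = sum g (?A1 \<union> ?A2)"
    by (rule arg_cong)
  also have "\<dots> = sum g ?A1 + sum g ?A2"
    using assms by (intro sum.union_disjoint) (auto intro: finite_subset[OF _ finite_set_mset])
  finally show ?thesis .
qed

theorem lemma1:
  fixes r a b c :: nat and \<Lambda> :: "triple multiset"
  assumes "r \<ge> 1" and "(a, b, c) \<noteq> (0, 0, 0)" and "(0, 0, 0) \<notin># \<Lambda>"
  shows "eq_in_S r
    (\<lambda>n. mono_sym n {#(a, b, c)#} * mono_sym n \<Lambda>)
    (\<lambda>n. of_nat (count \<Lambda> (a, b, c) + 1) * mono_sym n (add_mset (a, b, c) \<Lambda>)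
       + (\<Sum>t \<in> {(i, j, k). (i, j, k) \<in># \<Lambda> \<and> c + k \<le> r - 1}.
            (case t of (i, j, k) \<Rightarrow>
              of_nat (count \<Lambda> (a + i, b + j, c + k) + 1)
                * mono_sym n (add_mset (a + i, b + j, c + k) (\<Lambda> - {#(i, j, k)#}))))
       + (\<Sum>t \<in> {(i, j, k). (i, j, k) \<in># \<Lambda> \<and> c + k \<ge> r}.
            (case t of (i, j, k) \<Rightarrow>
              of_nat (count \<Lambda> (a + i + 1, b + j + 1, c + k - r) + 1)
                * mono_sym n (add_mset (a + i + 1, b + j + 1, c + k - r) (\<Lambda> - {#(i, j, k)#})))))"
  unfolding eq_in_S_def
proof (intro allI impI)
  fix n :: nat
  let ?A1 = "{(i, j, k). (i, j, k) \<in># \<Lambda> \<and> c + k \<le> r - 1}"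
  let ?A2 = "{(i, j, k). (i, j, k) \<in># \<Lambda> \<and> c + k \<ge> r}"
  let ?m = "\<lambda>(i, j, k). of_nat (count \<Lambda> (a + i, b + j, c + k) + 1)
    * mono_sym n (add_mset (a + i, b + j, c + k) (\<Lambda> - {#(i, j, k)#}))"
  let ?m' = "\<lambda>(i, j, k). of_nat (count \<Lambda> (a + i + 1, b + j + 1, c + k - r) + 1)
    * mono_sym n (add_mset (a + i + 1, b + j + 1, c + k - r) (\<Lambda> - {#(i, j, k)#}))"
  have "sum ?m (set_mset \<Lambda>) = sum ?m ?A1 + sum ?m ?A2"
    by (rule sum_set_mset_threshold_split[OF assms(1)])
  then have "mono_sym n {#(a, b, c)#} * mono_sym n \<Lambda>
      - (of_nat (count \<Lambda> (a, b, c) + 1) * mono_sym n (add_mset (a, b, c) \<Lambda>)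
         + sum ?m ?A1 + sum ?m' ?A2) = (\<Sum>t\<in>?A2. ?m t - ?m' t)"
    unfolding mono_sym_singleton_mult[OF assms(2,3)] sum_subtractf by simp
  also have "\<dots> \<in> idealI_sym r n"
  proof (rule idealI_sym_sum)
    fix t
    assume "t \<in> ?A2"
    then obtain i j k where t: "t = (i, j, k)" "(i, j, k) \<in># \<Lambda>" "r \<le> c + k"
      by auto
    then show "?m t - ?m' t \<in> idealI_sym r n"
      using mono_sym_straighten[OF assms(3) t(2), where \<alpha> = "a + i" and \<beta> = "b + j"
          and \<gamma> = "c + k - r" and r = r and n = n] assms(1,2) by auto
  qed (auto intro: finite_subset[OF _ finite_set_mset])
  finally show "mono_sym n {#(a, b, c)#} * mono_sym n \<Lambda>
      - (of_nat (count \<Lambda> (a, b, c) + 1) * mono_sym n (add_mset (a, b, c) \<Lambda>)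
         + sum ?m ?A1 + sum ?m' ?A2) \<in> idealI_sym r n" .
qed

end
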